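(* Let $g\in C(\mathbb{R},\mathbb{R})$ and $\mathcal{G}=\{g\}$. Then $\mathcal{K}_\mathcal{G}=\{\mathrm{CL}(E):E\in\mathrm{CL}(\mathbb{R})\}$ and $\mathcal{L}_\mathcal{G}=\{[g\restriction E]:E\in\mathrm{CL}(\mathbb{R})\}$, where $[g\restriction E]=\{f\in C(\mathbb{R},\mathbb{R}):f\restriction E=g\restriction E\}$.
   Context: For a closed set $E\subseteq\mathbb{R}$, $\mathrm{CL}(E)$ denotes the family of all closed subsets of $E$; $C(\mathbb{R},\mathbb{R})$ is the set of continuous functions $\mathbb{R}\to\mathbb{R}$. For $\mathcal{G}\subseteq C(\mathbb{R},\mathbb{R})$ let $R_\mathcal{G}=\{(f,E)\in C(\mathbb{R},\mathbb{R})\times\mathrm{CL}(\mathbb{R}):(\exists g\in\mathcal{G})\, f\restriction E=g\restriction E\}$. For $\mathcal{F}\subseteq C(\mathbb{R},\mathbb{R})$ and $\mathcal{E}\subseteq\mathrm{CL}(\mathbb{R})$ put $E_\mathcal{G}(\mathcal{F})=\{E\in\mathrm{CL}(\mathbb{R}):(\forall f\in\mathcal{F})\,(f,E)\in R_\mathcal{G}\}$ and $F_\mathcal{G}(\mathcal{E})=\{f\in C(\mathbb{R},\mathbb{R}):(\forall E\in\mathcal{E})\,(f,E)\in R_\mathcal{G}\}$. Let $\mathcal{K}_\mathcal{G}=\{E_\mathcal{G}(\mathcal{F}):\mathcal{F}\subseteq C(\mathbb{R},\mathbb{R})\}$ and $\mathcal{L}_\mathcal{G}=\{F_\mathcal{G}(\mathcal{E}):\mathcal{E}\subseteq\mathrm{CL}(\mathbb{R})\}$.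 *)

theory Defs
  imports "HOL-Analysis.Analysis"
begin

definition Cont :: "(real \<Rightarrow> real) set" where
  "Cont = {f. continuous_on UNIV f}"

definition CL :: "real set \<Rightarrow> real set set" where
  "CL E = {A. closed A \<and> A \<subseteq> E}"

definition R_G :: "(real \<Rightarrow> real) set \<Rightarrow> ((real \<Rightarrow> real) \<times> real set) set" where
  "R_G G = {(f, E). f \<in> Cont \<and> E \<in> CL UNIV \<and> (\<exists>g\<in>G. \<forall>x\<in>E. f x = g x)}"

definition E_G :: "(real \<Rightarrow> real) set \<Rightarrow> (real \<Rightarrow> real) set \<Rightarrow> real set set" where
  "E_G G F = {E \<in> CL UNIV. \<forall>f\<in>F. (f, E) \<in> R_G G}"

definition F_G :: "(real \<Rightarrow> real) set \<Rightarrow> real set set \<Rightarrow> (real \<Rightarrow> real) set" where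
  "F_G G \<E> = {f \<in> Cont. \<forall>E\<in>\<E>. (f, E) \<in> R_G G}"

definition K_G :: "(real \<Rightarrow> real) set \<Rightarrow> real set set set" where
  "K_G G = {E_G G F | F. F \<subseteq> Cont}"

definition L_G :: "(real \<Rightarrow> real) set \<Rightarrow> (real \<Rightarrow> real) set set" where
  "L_G G = {F_G G \<E> | \<E>. \<E> \<subseteq> CL UNIV}"

definition restr_class :: "(real \<Rightarrow> real) \<Rightarrow> real set \<Rightarrow> (real \<Rightarrow> real) set" where
  "restr_class g E = {f \<in> Cont. \<forall>x\<in>E. f x = g x}"

end

theory Submission
  imports Defs
begin

text \<open>The coincidence sets \<open>{x. f x = g x}\<close> of continuous functions \<open>f\<close> with a fixed
  continuous \<open>g\<close> are exactly the closed sets: they are closed by continuity, and a closed \<open>E\<close>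
  is the coincidence set of \<open>g + infdist _ E\<close>. Hence \<open>E_G {g} F\<close> consists of the closed
  subsets of the common coincidence set of the members of \<open>F\<close>, while \<open>F_G {g} \<E>\<close> consists
  of the continuous functions agreeing with \<open>g\<close> on \<open>\<Union>\<E>\<close>, equivalently on its closure.\<close>

lemma closed_coincidence_set:
  fixes f g :: "'a::topological_space \<Rightarrow> 'b::t2_space"
  assumes "continuous_on UNIV f" "continuous_on UNIV g"
  shows "closed {x. f x = g x}"
  using assms by (intro closed_Collect_eq) auto

lemma closed_eq_zero_set:
  fixes E :: "'a::metric_space set"
  assumes "closed E"
  obtains h :: "'a \<Rightarrow> real" where "continuous_on UNIV h" "{x. h x = 0} = E"
proof (cases "E = {}")
  case True
  \<comment> \<open>\<open>infdist x {} = 0\<close>, so the empty set needs a separate witness\<close>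
  then show ?thesis using that[of "\<lambda>_. 1"] by auto
next
  case False
  show ?thesis
  proof (rule that)
    show "continuous_on UNIV (\<lambda>x. infdist x E)"
      by (intro continuous_intros)
    show "{x. infdist x E = 0} = E"
      using in_closed_iff_infdist_zero[OF assms False] by auto
  qed
qed

lemma closed_is_coincidence_set:
  assumes "g \<in> Cont" "closed E"
  obtains f where "f \<in> Cont" "{x. f x = g x} = E"
proof -
  obtain h :: "real \<Rightarrow> real" where h: "continuous_on UNIV h" "{x. h x = 0} = E"
    by (rule closed_eq_zero_set[OF assms(2)])
  show ?thesis
  proof (rule that)
    show "(\<lambda>x. g x + h x) \<in> Cont"
      using assms(1) h(1) unfolding Cont_def by (simp add: continuous_on_add)
    show "{x. g x + h x = g x} = E"
      using h(2) by simp
  qed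
qed

lemma R_G_singleton_iff:
  "(f, E) \<in> R_G {g} \<longleftrightarrow> f \<in> Cont \<and> closed E \<and> E \<subseteq> {x. f x = g x}"
  unfolding R_G_def CL_def by auto

lemma E_G_singleton:
  assumes "F \<subseteq> Cont"
  shows "E_G {g} F = CL (\<Inter>f\<in>F. {x. f x = g x})"
  using assms unfolding E_G_def CL_def R_G_singleton_iff by auto

lemma F_G_singleton:
  assumes "g \<in> Cont" "\<E> \<subseteq> CL UNIV"
  shows "F_G {g} \<E> = restr_class g (closure (\<Union>\<E>))"
proof -
  have closure_iff:
    "\<Union>\<E> \<subseteq> {x. f x = g x} \<longleftrightarrow> closure (\<Union>\<E>) \<subseteq> {x. f x = g x}" if "f \<in> Cont" for f
  proof
    assume "\<Union>\<E> \<subseteq> {x. f x = g x}"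
    moreover have "closed {x. f x = g x}"
      using closed_coincidence_set[of f g] that assms(1) unfolding Cont_def by blast
    ultimately show "closure (\<Union>\<E>) \<subseteq> {x. f x = g x}"
      by (rule closure_minimal)
  qed (use closure_subset in blast)
  have R_G_iff:
    "(\<forall>E\<in>\<E>. (f, E) \<in> R_G {g}) \<longleftrightarrow> \<Union>\<E> \<subseteq> {x. f x = g x}" if "f \<in> Cont" for f
    using assms(2) that unfolding R_G_singleton_iff CL_def by blast
  show ?thesis
  proof (rule set_eqI)
    fix f
    have "f \<in> F_G {g} \<E> \<longleftrightarrow> f \<in> Cont \<and> \<Union>\<E> \<subseteq> {x. f x = g x}"
      unfolding F_G_def using R_G_iff by blast
    also have "\<dots> \<longleftrightarrow> f \<in> Cont \<and> closure (\<Union>\<E>) \<subseteq> {x. f x = g x}"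
      using closure_iff by blast
    also have "\<dots> \<longleftrightarrow> f \<in> restr_class g (closure (\<Union>\<E>))"
      unfolding restr_class_def by blast
    finally show "f \<in> F_G {g} \<E> \<longleftrightarrow> f \<in> restr_class g (closure (\<Union>\<E>))" .
  qed
qed

lemma K_G_singleton:
  assumes g: "g \<in> Cont"
  shows "K_G {g} = {CL E | E. E \<in> CL UNIV}"
proof (intro equalityI subsetI)
  fix K assume "K \<in> K_G {g}"
  then obtain F where F: "F \<subseteq> Cont" and K: "K = E_G {g} F"
    unfolding K_G_def by auto
  have "closed (\<Inter>f\<in>F. {x. f x = g x})"
    using F g closed_coincidence_set unfolding Cont_def by (intro closed_INT) auto
  then show "K \<in> {CL E | E. E \<in> CL UNIV}"
    unfolding K E_G_singleton[OF F] by (auto simp: CL_def)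
next
  fix K assume "K \<in> {CL E | E. E \<in> CL UNIV}"
  then obtain E where "closed E" and K: "K = CL E"
    unfolding CL_def by auto
  then obtain f where f: "f \<in> Cont" "{x. f x = g x} = E"
    using closed_is_coincidence_set[OF g] by blast
  then have "K = E_G {g} {f}"
    unfolding K by (simp add: E_G_singleton)
  then show "K \<in> K_G {g}"
    unfolding K_G_def using f(1) by blast
qed

lemma L_G_singleton:
  assumes g: "g \<in> Cont"
  shows "L_G {g} = {restr_class g E | E. E \<in> CL UNIV}"
proof (intro equalityI subsetI)
  fix L assume "L \<in> L_G {g}"
  then obtain \<E> where "\<E> \<subseteq> CL UNIV" and "L = F_G {g} \<E>"
    unfolding L_G_def by auto
  then have "L = restr_class g (closure (\<Union>\<E>))"
    using F_G_singleton[OF g] by simp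
  then show "L \<in> {restr_class g E | E. E \<in> CL UNIV}"
    unfolding CL_def by auto
next
  fix L assume "L \<in> {restr_class g E | E. E \<in> CL UNIV}"
  then obtain E where E: "E \<in> CL UNIV" and L: "L = restr_class g E"
    by auto
  then have "L = F_G {g} {E}"
    using F_G_singleton[OF g, of "{E}"] by (simp add: CL_def)
  then show "L \<in> L_G {g}"
    unfolding L_G_def using E by blast
qed

theorem theorem3p1:
  fixes g :: "real \<Rightarrow> real"
  assumes "g \<in> Cont"
  shows "K_G {g} = {CL E | E. E \<in> CL UNIV} \<and>
         L_G {g} = {restr_class g E | E. E \<in> CL UNIV}"
  using K_G_singleton[OF assms] L_G_singleton[OF assms] by simp

end
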